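(* Let $\kappa$ be a cardinal with $\omega<\kappa<\mathfrak{c}$. Then there exists a Borel $\sigma$-ideal $I$ on $2^{\omega}$ (containing all singletons and not containing $2^\omega$) such that $\kappa$ is the maximal cardinal for which there is a family of $\kappa$ pairwise disjoint Borel subsets of $2^{\omega}$ none of which belongs to $I$. In particular, $I$ does not satisfy ccc, does not satisfy property (B), and satisfies the $\kappa^{+}$-chain condition (every family of pairwise disjoint Borel sets not in $I$ has size at most $\kappa$).
   Context: An ideal on a set $X$ is a family of subsets closed under finite unions and subsets; a $\sigma$-ideal is additionally closed under countable unions. An ideal $I$ on a Polish space $X$ is Borel if every $A\in I$ is contained in some Borel $B\in I$. $I$ satisfies ccc if every family of pairwise disjoint Borel sets not in $I$ is countable. Property (B) for $I$: there is a family of cardinality $\mathfrak{c}$ (the continuum) of pairwise disjoint Borel subsets of $X$ none of which belongs to $I$. *)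

theory Defs
  imports "HOL-Analysis.Analysis" "HOL-Library.Equipollence"
begin

text \<open>The Cantor space 2^omega is the type nat => bool with the product topology
 (bool carries the discrete = order topology).  Its Borel sets are sets borel.\<close>

type_synonym cantor = "nat \<Rightarrow> bool"

definition borel_sets_cantor :: "cantor set set" where
  "borel_sets_cantor = sets (borel :: cantor measure)"

definition is_ideal :: "'a set set \<Rightarrow> bool" where
  "is_ideal I \<longleftrightarrow> {} \<in> I \<and> (\<forall>A\<in>I. \<forall>B\<in>I. A \<union> B \<in> I) \<and> (\<forall>A\<in>I. \<forall>B. B \<subseteq> A \<longrightarrow> B \<in> I)"

definition is_sigma_ideal :: "'a set set \<Rightarrow> bool" where
  "is_sigma_ideal I \<longleftrightarrow> is_ideal I \<and> (\<forall>A::nat \<Rightarrow> 'a set. range A \<subseteq> I \<longrightarrow> (\<Union>n. A n) \<in> I)"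

definition borel_ideal_cantor :: "cantor set set \<Rightarrow> bool" where
  "borel_ideal_cantor I \<longleftrightarrow> (\<forall>A\<in>I. \<exists>B\<in>borel_sets_cantor. A \<subseteq> B \<and> B \<in> I)"

definition disjoint_positive_family :: "cantor set set \<Rightarrow> cantor set set \<Rightarrow> bool" where
  "disjoint_positive_family I F \<longleftrightarrow> F \<subseteq> borel_sets_cantor \<and> disjoint F \<and> (\<forall>A\<in>F. A \<notin> I)"

end

theory Submission
  imports Defs "HOL-Probability.Probability"
begin

(* Interleaving with a fixed y maps 2^omega homeomorphically onto the closed fibre
   {x. odd part of x = y}; let mu_y be the image of the coin-flipping measure under this map.
   Choose a set Y of |K| points and let I consist of the sets that are null for every mu_y with
   y in Y.  Singletons are in I because mu_y has no atoms, and the fibres over Y are |K| disjoint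
   Borel sets outside I.  Conversely, every member of a disjoint family of Borel sets outside I
   is positive for some mu_y, and a finite measure is positive on only countably many disjoint
   sets (their measures are summable), so the family has at most |K| * aleph_0 = |K| members. *)

lemma (in finite_measure) countable_disjoint_not_null:
  assumes "G \<subseteq> sets M" and "disjoint G"
  shows "countable (G - null_sets M)"
proof -
  have "sum (measure M) F \<le> measure M (space M)" if "F \<subseteq> G" "finite F" for F
  proof -
    have "sum (measure M) F = measure M (\<Union>F)"
      using that assms by (intro measure_Union'[symmetric]) (auto simp: fmeasurable_eq_sets pairwise_subset)
    also have "\<dots> \<le> measure M (space M)"
      by (rule bounded_measure)
    finally show ?thesis .
  qed
  then have "measure M summable_on G"
    by (intro nonneg_bdd_above_summable_on bdd_aboveI) auto
  then have "countable {A\<in>G. measure M A \<noteq> 0}"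
    by (rule summable_countable_real)
  moreover have "G - null_sets M \<subseteq> {A\<in>G. measure M A \<noteq> 0}"
    using assms(1) by (auto simp: emeasure_eq_measure null_sets_def)
  ultimately show ?thesis
    by (rule countable_subset[rotated])
qed

definition common_null_ideal :: "('k \<Rightarrow> 'a measure) \<Rightarrow> 'k set \<Rightarrow> 'a set set" where
  "common_null_ideal \<mu> K = {A. \<exists>B. A \<subseteq> B \<and> (\<forall>k\<in>K. B \<in> null_sets (\<mu> k))}"

lemma is_sigma_ideal_common_null_ideal: "is_sigma_ideal (common_null_ideal \<mu> K)"
  unfolding is_sigma_ideal_def is_ideal_def
proof (intro conjI ballI allI impI)
  show "{} \<in> common_null_ideal \<mu> K"
    unfolding common_null_ideal_def by blast
next
  fix A B assume "A \<in> common_null_ideal \<mu> K" "B \<in> common_null_ideal \<mu> K"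
  then obtain A' B' where "A \<subseteq> A'" "\<forall>k\<in>K. A' \<in> null_sets (\<mu> k)" "B \<subseteq> B'" "\<forall>k\<in>K. B' \<in> null_sets (\<mu> k)"
    unfolding common_null_ideal_def by blast
  then have "A \<union> B \<subseteq> A' \<union> B'" "\<forall>k\<in>K. A' \<union> B' \<in> null_sets (\<mu> k)"
    by auto
  then show "A \<union> B \<in> common_null_ideal \<mu> K"
    unfolding common_null_ideal_def by blast
next
  fix A B assume "A \<in> common_null_ideal \<mu> K" "B \<subseteq> A"
  then show "B \<in> common_null_ideal \<mu> K"
    unfolding common_null_ideal_def by blast
next
  fix A :: "nat \<Rightarrow> 'a set" assume "range A \<subseteq> common_null_ideal \<mu> K"
  then have "\<forall>n. \<exists>B. A n \<subseteq> B \<and> (\<forall>k\<in>K. B \<in> null_sets (\<mu> k))"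
    unfolding common_null_ideal_def by blast
  then obtain B where B: "\<forall>n. A n \<subseteq> B n \<and> (\<forall>k\<in>K. B n \<in> null_sets (\<mu> k))"
    by (rule choice[THEN exE])
  then have "(\<Union>n. A n) \<subseteq> (\<Union>n. B n)" "\<forall>k\<in>K. (\<Union>n. B n) \<in> null_sets (\<mu> k)"
    by (auto intro: null_sets_UN)
  then show "(\<Union>n. A n) \<in> common_null_ideal \<mu> K"
    unfolding common_null_ideal_def by blast
qed

lemma measurable_in_common_null_ideal_iff:
  assumes "\<And>k. k \<in> K \<Longrightarrow> B \<in> sets (\<mu> k)"
  shows "B \<in> common_null_ideal \<mu> K \<longleftrightarrow> (\<forall>k\<in>K. B \<in> null_sets (\<mu> k))"
proof
  assume "B \<in> common_null_ideal \<mu> K"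
  then obtain B' where "B \<subseteq> B'" "\<forall>k\<in>K. B' \<in> null_sets (\<mu> k)"
    unfolding common_null_ideal_def by blast
  then show "\<forall>k\<in>K. B \<in> null_sets (\<mu> k)"
    using assms null_sets_subset by blast
qed (auto simp: common_null_ideal_def)

lemma common_null_ideal_measurable_cover:
  assumes "A \<in> common_null_ideal \<mu> K" and "k \<in> K"
  shows "\<exists>B\<in>sets (\<mu> k). A \<subseteq> B \<and> B \<in> common_null_ideal \<mu> K"
  using assms unfolding common_null_ideal_def by blast

lemma countable_lepoll_infinite:
  assumes "countable A" and "infinite B"
  shows "A \<lesssim> B"
proof -
  have "A \<lesssim> (UNIV :: nat set)"
    using assms(1) unfolding countable_def lepoll_def by blast
  also have "(UNIV :: nat set) \<lesssim> B"
    using assms(2) by (simp add: infinite_le_lepoll)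
  finally show ?thesis .
qed

lemma common_null_ideal_disjoint_positive_lepoll:
  includes cardinal_syntax
  assumes "infinite K"
    and finite: "\<And>k. k \<in> K \<Longrightarrow> finite_measure (\<mu> k)"
    and measurable: "\<And>k. k \<in> K \<Longrightarrow> F \<subseteq> sets (\<mu> k)"
    and "disjoint F"
    and positive: "F \<inter> common_null_ideal \<mu> K = {}"
  shows "F \<lesssim> K"
proof -
  have "F \<subseteq> (\<Union>k\<in>K. F - null_sets (\<mu> k))"
    using positive unfolding common_null_ideal_def by blast
  moreover have "|F - null_sets (\<mu> k)| \<le>o |K|" if "k \<in> K" for k
  proof -
    have "countable (F - null_sets (\<mu> k))"
      by (rule finite_measure.countable_disjoint_not_null[OF finite measurable \<open>disjoint F\<close>, OF that that])
    then have "F - null_sets (\<mu> k) \<lesssim> K"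
      using \<open>infinite K\<close> by (rule countable_lepoll_infinite)
    then show ?thesis
      unfolding lepoll_def card_of_ordLeq .
  qed
  then have "|\<Union>k\<in>K. F - null_sets (\<mu> k)| \<le>o |K|"
    by (intro card_of_UNION_ordLeq_infinite[OF \<open>infinite K\<close> ordLeq_refl[OF card_of_Card_order]] ballI)
  then have "(\<Union>k\<in>K. F - null_sets (\<mu> k)) \<lesssim> K"
    unfolding lepoll_def card_of_ordLeq .
  ultimately show ?thesis
    by (rule lepoll_trans[OF subset_imp_lepoll])
qed

instance bool :: second_countable_topology
proof
  show "\<exists>B::bool set set. countable B \<and> open = generate_topology B"
  proof (intro exI[of _ UNIV] conjI ext)
    fix S :: "bool set"
    show "open S = generate_topology UNIV S"
      using Topological_Spaces.open_discrete[of S] generate_topology.Basis[of S UNIV] by simp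
  qed simp
qed

definition coin_flips :: "cantor measure" where
  "coin_flips = PiM UNIV (\<lambda>_. measure_pmf (bernoulli_pmf (1/2)))"

lemma prob_space_coin_flips: "prob_space coin_flips"
  unfolding coin_flips_def by (intro prob_space_PiM prob_space_measure_pmf)

lemma sets_coin_flips: "sets coin_flips = sets borel"
proof -
  have "sets coin_flips = sets (PiM UNIV (\<lambda>_::nat. (borel :: bool measure)))"
    unfolding coin_flips_def by (rule sets_PiM_cong) (auto intro: borel_open Topological_Spaces.open_discrete)
  also have "\<dots> = sets borel"
    by (rule sets_PiM_equal_borel)
  finally show ?thesis .
qed

lemma space_coin_flips: "space coin_flips = UNIV"
  using sets_eq_imp_space_eq[OF sets_coin_flips] by simp

lemma closed_cantor_singleton: "closed {x :: cantor}"
proof -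
  have "{x} = (\<Inter>i. (\<lambda>z. z i) -` {x i})"
    by (auto simp: fun_eq_iff)
  moreover have "closed ((\<lambda>z::cantor. z i) -` {x i})" for i
    by (intro closed_vimage closed_singleton continuous_on_product_coordinates)
  ultimately show ?thesis
    by (simp add: closed_INT)
qed

lemma coin_flips_singleton_null: "{x} \<in> null_sets coin_flips"
proof -
  let ?coin = "measure_pmf (bernoulli_pmf (1/2))"
  interpret sequence_space ?coin
    by unfold_locales
  have "Pi UNIV (\<lambda>i. {x i}) = {x}"
    by (auto simp: fun_eq_iff)
  then have "(\<lambda>n. \<Prod>i\<le>n. measure ?coin {x i}) \<longlonglongrightarrow> measure coin_flips {x}"
    unfolding coin_flips_def using measure_PiM_countable[of "\<lambda>i. {x i}"] by simp
  moreover have "(\<lambda>n. \<Prod>i\<le>n. measure ?coin {x i}) = (\<lambda>n. (1/2) ^ Suc n)"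
    by (simp add: measure_pmf_single)
  moreover have "(\<lambda>n. (1/2::real) ^ Suc n) \<longlonglongrightarrow> 0"
    by (rule LIMSEQ_Suc) (simp add: LIMSEQ_realpow_zero)
  ultimately have "measure coin_flips {x} = 0"
    by (metis LIMSEQ_unique)
  moreover have "{x} \<in> sets coin_flips"
    by (simp add: sets_coin_flips borel_closed closed_cantor_singleton)
  ultimately show ?thesis
    using prob_space.finite_measure[OF prob_space_coin_flips]
    by (simp add: finite_measure.emeasure_eq_measure null_sets_def)
qed

definition interleave :: "cantor \<Rightarrow> cantor \<Rightarrow> cantor" where
  "interleave y z n = (if even n then z (n div 2) else y (n div 2))"

definition odd_part :: "cantor \<Rightarrow> cantor" where
  "odd_part x n = x (Suc (2 * n))"

lemma odd_part_interleave [simp]: "odd_part (interleave y z) = y"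
  by (simp add: odd_part_def interleave_def fun_eq_iff)

lemma inj_interleave: "inj (interleave y)"
proof (rule injI)
  fix z z' assume "interleave y z = interleave y z'"
  then have "interleave y z (2 * n) = interleave y z' (2 * n)" for n
    by simp
  then show "z = z'"
    by (simp add: interleave_def fun_eq_iff)
qed

lemma continuous_interleave: "continuous_on UNIV (interleave y)"
  unfolding interleave_def
proof (rule continuous_on_coordinatewise_then_product)
  show "continuous_on UNIV (\<lambda>z. if even n then z (n div 2) else y (n div 2))" for n
    by (cases "even n") auto
qed

lemma continuous_odd_part: "continuous_on UNIV odd_part"
  unfolding odd_part_def by (intro continuous_on_coordinatewise_then_product) auto

lemma closed_odd_part_fibre: "closed (odd_part -` {y})"
  by (intro closed_vimage closed_cantor_singleton continuous_odd_part)

lemma inj_odd_part_fibre: "inj (\<lambda>y. odd_part -` {y})"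
proof (rule injI)
  fix y y' assume "odd_part -` {y} = odd_part -` {y'}"
  then have "interleave y undefined \<in> odd_part -` {y'}"
    by (metis odd_part_interleave vimage_singleton_eq)
  then show "y = y'"
    by simp
qed

definition fibre_measure :: "cantor \<Rightarrow> cantor measure" where
  "fibre_measure y = distr coin_flips borel (interleave y)"

lemma measurable_interleave: "interleave y \<in> coin_flips \<rightarrow>\<^sub>M borel"
  using borel_measurable_continuous_onI[OF continuous_interleave]
  by (simp add: measurable_cong_sets[OF sets_coin_flips])

lemma prob_space_fibre_measure: "prob_space (fibre_measure y)"
  unfolding fibre_measure_def
  by (intro prob_space.prob_space_distr prob_space_coin_flips measurable_interleave)

lemma sets_fibre_measure: "sets (fibre_measure y) = sets borel"
  by (simp add: fibre_measure_def)

lemma null_sets_fibre_measure_iff: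
  "A \<in> null_sets (fibre_measure y) \<longleftrightarrow> interleave y -` A \<in> null_sets coin_flips \<and> A \<in> sets borel"
  unfolding fibre_measure_def using null_sets_distr_iff[OF measurable_interleave]
  by (simp add: space_coin_flips)

lemma fibre_measure_singleton_null: "{x} \<in> null_sets (fibre_measure y)"
proof -
  have "interleave y -` {x} \<subseteq> {THE z. interleave y z = x}"
    by (rule inj_vimage_singleton[OF inj_interleave])
  moreover have "interleave y -` {x} \<in> sets coin_flips"
    using measurable_sets[OF measurable_interleave, of "{x}"]
    by (simp add: space_coin_flips borel_closed closed_cantor_singleton)
  ultimately have "interleave y -` {x} \<in> null_sets coin_flips"
    by (intro null_sets_subset[OF coin_flips_singleton_null])
  then show ?thesis
    by (simp add: null_sets_fibre_measure_iff borel_closed closed_cantor_singleton)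
qed

lemma odd_part_fibre_not_null: "odd_part -` {y} \<notin> null_sets (fibre_measure y)"
proof -
  have "interleave y -` odd_part -` {y} = UNIV"
    by auto
  moreover have "UNIV \<notin> null_sets coin_flips"
    using prob_space.emeasure_space_1[OF prob_space_coin_flips]
    by (auto simp: space_coin_flips null_sets_def)
  ultimately show ?thesis
    by (simp add: null_sets_fibre_measure_iff)
qed

definition fibre_ideal :: "cantor set \<Rightarrow> cantor set set" where
  "fibre_ideal Y = common_null_ideal fibre_measure Y"

lemma is_sigma_ideal_fibre_ideal: "is_sigma_ideal (fibre_ideal Y)"
  unfolding fibre_ideal_def by (rule is_sigma_ideal_common_null_ideal)

lemma borel_ideal_fibre_ideal:
  assumes "y \<in> Y"
  shows "borel_ideal_cantor (fibre_ideal Y)"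
  unfolding borel_ideal_cantor_def
proof
  fix A assume "A \<in> fibre_ideal Y"
  with common_null_ideal_measurable_cover[of A fibre_measure Y y] assms
  show "\<exists>B\<in>borel_sets_cantor. A \<subseteq> B \<and> B \<in> fibre_ideal Y"
    by (simp add: fibre_ideal_def sets_fibre_measure borel_sets_cantor_def)
qed

lemma singleton_in_fibre_ideal: "{x} \<in> fibre_ideal Y"
  unfolding fibre_ideal_def common_null_ideal_def using fibre_measure_singleton_null by blast

lemma odd_part_fibre_notin_fibre_ideal:
  assumes "y \<in> Y"
  shows "odd_part -` {y} \<notin> fibre_ideal Y"
proof -
  have "odd_part -` {y} \<in> sets (fibre_measure y')" for y'
    by (simp add: sets_fibre_measure borel_closed closed_odd_part_fibre)
  then have "odd_part -` {y} \<in> fibre_ideal Y \<longleftrightarrow> (\<forall>y'\<in>Y. odd_part -` {y} \<in> null_sets (fibre_measure y'))"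
    unfolding fibre_ideal_def by (rule measurable_in_common_null_ideal_iff)
  then show ?thesis
    using assms odd_part_fibre_not_null by blast
qed

lemma UNIV_notin_fibre_ideal:
  assumes "y \<in> Y"
  shows "UNIV \<notin> fibre_ideal Y"
proof
  assume "UNIV \<in> fibre_ideal Y"
  then have "odd_part -` {y} \<in> fibre_ideal Y"
    unfolding fibre_ideal_def common_null_ideal_def by blast
  with odd_part_fibre_notin_fibre_ideal[OF assms] show False
    by contradiction
qed

lemma disjoint_positive_family_odd_part_fibres:
  "disjoint_positive_family (fibre_ideal Y) ((\<lambda>y. odd_part -` {y}) ` Y)"
  unfolding disjoint_positive_family_def
proof (intro conjI ballI)
  show "(\<lambda>y. odd_part -` {y}) ` Y \<subseteq> borel_sets_cantor"
    by (auto simp: borel_sets_cantor_def borel_closed closed_odd_part_fibre)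
  show "disjoint ((\<lambda>y. odd_part -` {y}) ` Y)"
    unfolding disjoint_def by auto
  show "A \<notin> fibre_ideal Y" if "A \<in> (\<lambda>y. odd_part -` {y}) ` Y" for A
    using that odd_part_fibre_notin_fibre_ideal by blast
qed

lemma odd_part_fibres_eqpoll: "(\<lambda>y. odd_part -` {y}) ` Y \<approx> Y"
  by (rule inj_on_image_eqpoll_self, rule inj_on_subset[OF inj_odd_part_fibre]) simp

lemma disjoint_positive_family_fibre_ideal_lepoll:
  assumes "infinite Y" and "disjoint_positive_family (fibre_ideal Y) F"
  shows "F \<lesssim> Y"
proof (rule common_null_ideal_disjoint_positive_lepoll)
  show "finite_measure (fibre_measure y)" for y
    by (rule prob_space.finite_measure[OF prob_space_fibre_measure])
  show "F \<subseteq> sets (fibre_measure y)" for y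
    using assms(2) by (simp add: disjoint_positive_family_def sets_fibre_measure borel_sets_cantor_def)
  show "disjoint F" "F \<inter> common_null_ideal fibre_measure Y = {}"
    using assms(2) by (auto simp: disjoint_positive_family_def fibre_ideal_def)
qed fact

lemma real_lepoll_cantor: "(UNIV :: real set) \<lesssim> (UNIV :: cantor set)"
proof -
  have "(UNIV :: real set) \<lesssim> (UNIV :: nat set set)"
    using nat_sets_eqpoll_reals eqpoll_sym eqpoll_imp_lepoll by blast
  also have "(UNIV :: nat set set) \<lesssim> (UNIV :: cantor set)"
    unfolding lepoll_def by (rule exI[of _ "\<lambda>S n. n \<in> S"]) (auto simp: inj_on_def fun_eq_iff set_eq_iff)
  finally show ?thesis .
qed

theorem theorem1p1:
  fixes K :: "'k set"
  assumes "uncountable K"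
    and "K \<prec> (UNIV :: real set)"
  shows "\<exists>I :: cantor set set.
           is_sigma_ideal I \<and> borel_ideal_cantor I \<and>
           (\<forall>x. {x} \<in> I) \<and> UNIV \<notin> I \<and>
           (\<exists>F. disjoint_positive_family I F \<and> F \<approx> K) \<and>
           (\<forall>F. disjoint_positive_family I F \<longrightarrow> F \<lesssim> K)"
proof -
  obtain e :: "'k \<Rightarrow> cantor" where "inj_on e K"
    using lepoll_trans[OF lesspoll_imp_lepoll[OF assms(2)] real_lepoll_cantor]
    unfolding lepoll_def by blast
  define Y where "Y = e ` K"
  have "Y \<approx> K"
    unfolding Y_def using \<open>inj_on e K\<close> by (rule inj_on_image_eqpoll_self)
  have "infinite Y"
    using eqpoll_finite_iff[OF \<open>Y \<approx> K\<close>] uncountable_infinite[OF assms(1)] by simp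
  then obtain y where "y \<in> Y"
    by (metis finite.emptyI ex_in_conv)
  have "\<exists>F. disjoint_positive_family (fibre_ideal Y) F \<and> F \<approx> K"
    using disjoint_positive_family_odd_part_fibres eqpoll_trans[OF odd_part_fibres_eqpoll \<open>Y \<approx> K\<close>]
    by blast
  moreover have "F \<lesssim> K" if "disjoint_positive_family (fibre_ideal Y) F" for F
    using disjoint_positive_family_fibre_ideal_lepoll[OF \<open>infinite Y\<close> that] \<open>Y \<approx> K\<close>
    by (rule lepoll_trans2)
  ultimately show ?thesis
    using is_sigma_ideal_fibre_ideal borel_ideal_fibre_ideal[OF \<open>y \<in> Y\<close>]
      singleton_in_fibre_ideal UNIV_notin_fibre_ideal[OF \<open>y \<in> Y\<close>]
    by (intro exI[of _ "fibre_ideal Y"]) simp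
qed

end
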